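(* Let $a$ be a positive integer and let $L_{a,a} = \{C_{i,1} : 1 \le i \le a+1\} \cup \{C_{1,j} : 1 < j \le a+1\}$, an $L$ polyomino of size $n = 2a+1$. Then on the $n \times n$ board, $\mathrm{cp}_{\mathrm{fixed}}(L_{a,a}) = 1$.
   Context: For integers $i,j$, $C_{i,j}$ denotes the unit square cell in column $i$ and row $j$ of the integer grid (columns numbered left to right, rows numbered top to bottom). A polyomino is a finite set of cells; its size is its number of cells. For a polyomino $\mathcal{P}$ of size $n$ the board is $\mathbb{B} = \{C_{i,j} : 1 \le i,j \le n\}$. The shift of $\mathcal{P}$ by integers $(c,d)$ is $\mathcal{P}+(c,d) = \{C_{x+c,y+d} : C_{x,y} \in \mathcal{P}\}$; a fixed copy of $\mathcal{P}$ is any shift of $\mathcal{P}$ (no rotations or reflections). A set of polyominoes is a valid arrangement if each is contained in $\mathbb{B}$ and they are pairwise disjoint. A fixed packing of $\mathcal{P}$ is a set of fixed copies of $\mathcal{P}$ forming a valid arrangement such that adding any further fixed copy of $\mathcal{P}$ yields an invalid arrangement. The clumsy fixed packing number $\mathrm{cp}_{\mathrm{fixed}}(\mathcal{P})$ is the minimum number of polyominoes in a fixed packing of $\mathcal{P}$ on the $n \times n$ board. *)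

theory Defs
  imports Main
begin

(* A cell C_{i,j} is represented by the pair (i,j) :: int \<times> int  (column i, row j). *)
type_synonym cell = "int \<times> int"
type_synonym polyomino = "cell set"

definition board :: "nat \<Rightarrow> polyomino" where
  "board n = {(i,j). 1 \<le> i \<and> i \<le> int n \<and> 1 \<le> j \<and> j \<le> int n}"

definition shift :: "polyomino \<Rightarrow> int \<Rightarrow> int \<Rightarrow> polyomino" where
  "shift P c d = {(x + c, y + d) | x y. (x, y) \<in> P}"

definition fixed_copy :: "polyomino \<Rightarrow> polyomino \<Rightarrow> bool" where
  "fixed_copy P Q \<longleftrightarrow> (\<exists>c d. Q = shift P c d)"

definition valid_arrangement :: "polyomino \<Rightarrow> polyomino set \<Rightarrow> bool" where
  "valid_arrangement B S \<longleftrightarrow>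
     (\<forall>Q\<in>S. Q \<subseteq> B) \<and> (\<forall>Q\<in>S. \<forall>R\<in>S. Q \<noteq> R \<longrightarrow> Q \<inter> R = {})"

definition fixed_packing :: "polyomino \<Rightarrow> polyomino set \<Rightarrow> bool" where
  "fixed_packing P S \<longleftrightarrow>
     (\<forall>Q\<in>S. fixed_copy P Q) \<and> valid_arrangement (board (card P)) S \<and>
     (\<forall>Q. fixed_copy P Q \<and> Q \<notin> S \<longrightarrow> \<not> valid_arrangement (board (card P)) (insert Q S))"

definition cp_fixed :: "polyomino \<Rightarrow> nat" where
  "cp_fixed P = (LEAST k. \<exists>S. fixed_packing P S \<and> finite S \<and> card S = k)"

definition L_poly :: "nat \<Rightarrow> nat \<Rightarrow> polyomino" where
  "L_poly a b = {(i, 1) | i. 1 \<le> i \<and> i \<le> int a + 1} \<union> {(1, j) | j. 1 < j \<and> j \<le> int b + 1}"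

end

theory Submission
  imports Defs
begin

text \<open>Shift \<open>L\<^sub>a\<^sub>,\<^sub>a\<close> right by \<open>a\<close>, so that its vertical arm occupies the middle
  column \<open>a + 1\<close> of the board, rows \<open>1 .. a + 1\<close>. Any copy of \<open>L\<^sub>a\<^sub>,\<^sub>a\<close> on the board
  has its horizontal arm in a row \<open>1 + d\<close> with \<open>d \<le> a\<close>, spanning columns
  \<open>1 + c .. a + 1 + c\<close> with \<open>0 \<le> c \<le> a\<close>, so it crosses that arm. Hence this one copy
  already blocks every other copy, while the empty set blocks nothing.\<close>

lemma mem_shift: "(x, y) \<in> shift P c d \<longleftrightarrow> (x - c, y - d) \<in> P"
  unfolding shift_def by force

lemma fixed_packing_singleton:
  assumes "fixed_copy P Q\<^sub>0" "Q\<^sub>0 \<subseteq> board (card P)"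
    and "\<And>Q. fixed_copy P Q \<Longrightarrow> Q \<subseteq> board (card P) \<Longrightarrow> Q \<inter> Q\<^sub>0 \<noteq> {}"
  shows "fixed_packing P {Q\<^sub>0}"
  unfolding fixed_packing_def
proof (intro conjI allI impI)
  show "\<forall>Q\<in>{Q\<^sub>0}. fixed_copy P Q" "valid_arrangement (board (card P)) {Q\<^sub>0}"
    using assms(1,2) by (auto simp: valid_arrangement_def)
  fix Q assume "fixed_copy P Q \<and> Q \<notin> {Q\<^sub>0}"
  then show "\<not> valid_arrangement (board (card P)) (insert Q {Q\<^sub>0})"
    using assms(3)[of Q] by (auto simp: valid_arrangement_def)
qed

lemma not_fixed_packing_empty:
  assumes "fixed_copy P Q" "Q \<subseteq> board (card P)"
  shows "\<not> fixed_packing P {}"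
  using assms by (auto simp: fixed_packing_def valid_arrangement_def)

lemma cp_fixed_eq_1:
  assumes "fixed_copy P Q\<^sub>0" "Q\<^sub>0 \<subseteq> board (card P)"
    and "\<And>Q. fixed_copy P Q \<Longrightarrow> Q \<subseteq> board (card P) \<Longrightarrow> Q \<inter> Q\<^sub>0 \<noteq> {}"
  shows "cp_fixed P = 1"
  unfolding cp_fixed_def
proof (rule Least_equality)
  show "\<exists>S. fixed_packing P S \<and> finite S \<and> card S = 1"
    using fixed_packing_singleton[OF assms] by (intro exI[of _ "{Q\<^sub>0}"]) simp
next
  fix k assume "\<exists>S. fixed_packing P S \<and> finite S \<and> card S = k"
  then obtain S where "fixed_packing P S" "finite S" "card S = k" by blast
  then show "1 \<le> k"
    using not_fixed_packing_empty[OF assms(1,2)]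
    by (cases "S = {}") (auto simp: Suc_le_eq card_gt_0_iff)
qed

lemma card_L_poly: "card (L_poly a b) = a + b + 1"
proof -
  have "L_poly a b = (\<lambda>i. (i, 1)) ` {1..int a + 1} \<union> (\<lambda>j. (1, j)) ` {2..int b + 1}"
    unfolding L_poly_def by auto
  also have "card \<dots> = card ((\<lambda>i. (i, 1::int)) ` {1..int a + 1})
      + card ((\<lambda>j. (1::int, j)) ` {2..int b + 1})"
    by (rule card_Un_disjoint) auto
  also have "\<dots> = (a + 1) + b"
    by (subst (1 2) card_image) (auto simp: inj_on_def)
  finally show ?thesis by simp
qed

lemma shift_L_poly_subset_board_iff:
  "shift (L_poly a b) c d \<subseteq> board n \<longleftrightarrow>
     0 \<le> c \<and> c + int a + 1 \<le> int n \<and> 0 \<le> d \<and> d + int b + 1 \<le> int n"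
proof
  assume sub: "shift (L_poly a b) c d \<subseteq> board n"
  have "(1 + c, 1 + d) \<in> shift (L_poly a b) c d"
    "(int a + 1 + c, 1 + d) \<in> shift (L_poly a b) c d"
    "(1 + c, int b + 1 + d) \<in> shift (L_poly a b) c d"
    by (auto simp: mem_shift L_poly_def)
  with sub show "0 \<le> c \<and> c + int a + 1 \<le> int n \<and> 0 \<le> d \<and> d + int b + 1 \<le> int n"
    by (auto simp: board_def)
next
  assume "0 \<le> c \<and> c + int a + 1 \<le> int n \<and> 0 \<le> d \<and> d + int b + 1 \<le> int n"
  then show "shift (L_poly a b) c d \<subseteq> board n"
    by (auto simp: board_def shift_def L_poly_def)
qed

lemma shift_L_poly_meets_middle_copy:
  assumes "0 \<le> c" "c \<le> int a" "0 \<le> d" "d \<le> int a"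
  shows "shift (L_poly a a) c d \<inter> shift (L_poly a a) (int a) 0 \<noteq> {}"
proof -
  have "(int a + 1, 1 + d) \<in> shift (L_poly a a) c d \<inter> shift (L_poly a a) (int a) 0"
    using assms by (auto simp: mem_shift L_poly_def)
  then show ?thesis by blast
qed

theorem theorem3:
  fixes a :: nat
  assumes "0 < a"
  shows "cp_fixed (L_poly a a) = 1"
proof (rule cp_fixed_eq_1)
  let ?L = "L_poly a a"
  have board: "board (card ?L) = board (2 * a + 1)"
    by (simp add: card_L_poly mult_2)
  show "fixed_copy ?L (shift ?L (int a) 0)"
    unfolding fixed_copy_def by blast
  show "shift ?L (int a) 0 \<subseteq> board (card ?L)"
    unfolding board shift_L_poly_subset_board_iff by simp
  fix Q assume "fixed_copy ?L Q" "Q \<subseteq> board (card ?L)"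
  then obtain c d where "Q = shift ?L c d" "shift ?L c d \<subseteq> board (2 * a + 1)"
    unfolding fixed_copy_def board by blast
  then show "Q \<inter> shift ?L (int a) 0 \<noteq> {}"
    using shift_L_poly_meets_middle_copy[of c a d]
    unfolding shift_L_poly_subset_board_iff by auto
qed

end
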